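(* In the setting described in the context, let $R=I_m-H\bar H$. Then the induced norm $\|R\|=\sqrt{\lambda_{\max}(R^TR)}$ equals $1$.
   Context: Let $V=\{1,\ldots,N\}$, $N\ge 2$, and let $G_I=(V,E_I)$ be a connected undirected graph which is not complete, with adjacency matrix $A$; let $B=A+I_N$. For $i\in V$ let $N_I(i)$ be the set of neighbors of $i$ in $G_I$, $\tilde N_I(i)=N_I(i)\cup\{i\}$, $m_i=\deg_{G_I}(i)+1$, $m=\sum_{i=1}^N m_i$. For $i,j\in V$ set $s_{ij}=\sum_{l=1}^{j}B(i,l)+\sum_{r=1}^{i-1}m_r$ (the last sum is $0$ for $i=1$). Let $e_1,\ldots,e_m$ be the standard basis of $\mathbb{R}^m$ and define $E_j^i=e_{s_{ij}}$ if $j\in\tilde N_I(i)$ and $E_j^i=\mathbf{0}_m$ otherwise. Let $H=\big[\sum_{i=1}^N E_1^i,\ldots,\sum_{i=1}^N E_N^i\big]\in\mathbb{R}^{m\times N}$ and $\bar H=\mathrm{diag}(1/m_1,\ldots,1/m_N)H^T\in\mathbb{R}^{N\times m}$. *)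

theory Defs
  imports "Jordan_Normal_Form.Char_Poly"
begin

(* Indices of
   vertices and of R^m are 1-based as in the paper; JNF matrices are 0-based,
   so entry (k,j) of a JNF matrix corresponds to paper index (k+1, j+1). *)

definition Vset :: "nat \<Rightarrow> nat set" where
  "Vset N = {1..N}"

definition adjA :: "(nat \<Rightarrow> nat \<Rightarrow> bool) \<Rightarrow> nat \<Rightarrow> nat \<Rightarrow> nat" where
  "adjA adj i l = (if adj i l then 1 else 0)"

definition Bmat :: "(nat \<Rightarrow> nat \<Rightarrow> bool) \<Rightarrow> nat \<Rightarrow> nat \<Rightarrow> nat" where
  "Bmat adj i l = adjA adj i l + (if i = l then 1 else 0)"

definition nbr :: "nat \<Rightarrow> (nat \<Rightarrow> nat \<Rightarrow> bool) \<Rightarrow> nat \<Rightarrow> nat set" where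
  "nbr N adj i = {j \<in> Vset N. adj i j}"

definition nbr_cl :: "nat \<Rightarrow> (nat \<Rightarrow> nat \<Rightarrow> bool) \<Rightarrow> nat \<Rightarrow> nat set" where
  "nbr_cl N adj i = insert i (nbr N adj i)"

definition mdeg :: "nat \<Rightarrow> (nat \<Rightarrow> nat \<Rightarrow> bool) \<Rightarrow> nat \<Rightarrow> nat" where
  "mdeg N adj i = card (nbr N adj i) + 1"

definition mtot :: "nat \<Rightarrow> (nat \<Rightarrow> nat \<Rightarrow> bool) \<Rightarrow> nat" where
  "mtot N adj = (\<Sum>i = 1..N. mdeg N adj i)"

definition sidx :: "nat \<Rightarrow> (nat \<Rightarrow> nat \<Rightarrow> bool) \<Rightarrow> nat \<Rightarrow> nat \<Rightarrow> nat" where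
  "sidx N adj i j = (\<Sum>l = 1..j. Bmat adj i l) + (\<Sum>r = 1..i - 1. mdeg N adj r)"

definition Evec :: "nat \<Rightarrow> (nat \<Rightarrow> nat \<Rightarrow> bool) \<Rightarrow> nat \<Rightarrow> nat \<Rightarrow> real vec" where
  "Evec N adj i j = (if j \<in> nbr_cl N adj i
      then vec (mtot N adj) (\<lambda>k. if Suc k = sidx N adj i j then 1 else 0)
      else 0\<^sub>v (mtot N adj))"

definition Hmat :: "nat \<Rightarrow> (nat \<Rightarrow> nat \<Rightarrow> bool) \<Rightarrow> real mat" where
  "Hmat N adj = mat (mtot N adj) N
      (\<lambda>(k, j). (\<Sum>i = 1..N. Evec N adj i (Suc j) $ k))"

definition Hbar :: "nat \<Rightarrow> (nat \<Rightarrow> nat \<Rightarrow> bool) \<Rightarrow> real mat" where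
  "Hbar N adj = mat N N (\<lambda>(i, j). if i = j then 1 / real (mdeg N adj (Suc i)) else 0)
      * transpose_mat (Hmat N adj)"

definition Rmat :: "nat \<Rightarrow> (nat \<Rightarrow> nat \<Rightarrow> bool) \<Rightarrow> real mat" where
  "Rmat N adj = 1\<^sub>m (mtot N adj) - Hmat N adj * Hbar N adj"

definition lambda_max :: "real mat \<Rightarrow> real" where
  "lambda_max M = Max {l. eigenvalue M l}"

definition induced_norm :: "real mat \<Rightarrow> real" where
  "induced_norm R = sqrt (lambda_max (transpose_mat R * R))"

end

theory Submission
  imports Defs
begin

text \<open>Each row of H contains exactly one entry 1 (the slots s_ij are distinct), and by
  symmetry of the graph column j contains m_j of them, all in distinct rows. Hence
  H^T H = diag(m_1, ..., m_N), so Hbar H = I and P = H Hbar = H diag(1/m) H^T is a symmetric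
  idempotent; so is R = I - P, whence R^T R = R and every eigenvalue of R is 0 or 1. The
  eigenvalue 1 occurs as soon as the graph has an edge ab: the rows of H at the slots s_ab and
  s_bb coincide, so Hbar annihilates e_(s_ab) - e_(s_bb).\<close>

lemma transpose_mat_diag: "transpose_mat (mat_diag n f) = mat_diag n f"
  by (intro eq_matI) (auto simp: mat_diag_def)

lemma idempotent_of_left_inverse:
  fixes A :: "'a :: semiring_1 mat"
  assumes A: "A \<in> carrier_mat n k" and B: "B \<in> carrier_mat k n" and BA: "B * A = 1\<^sub>m k"
  shows "A * B * (A * B) = A * B"
proof -
  have "A * B * (A * B) = A * ((B * A) * B)"
    using A B by (simp add: assoc_mult_mat[of _ n k _ n _ n])
  also have "\<dots> = A * B" using left_mult_one_mat[OF B] by (simp add: BA)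
  finally show ?thesis .
qed

lemma idempotent_one_minus:
  fixes P :: "'a :: ring_1 mat"
  assumes P: "P \<in> carrier_mat n n" and PP: "P * P = P"
  shows "(1\<^sub>m n - P) * (1\<^sub>m n - P) = 1\<^sub>m n - P"
proof -
  have "(1\<^sub>m n - P) * (1\<^sub>m n - P) = 1\<^sub>m n * (1\<^sub>m n - P) - P * (1\<^sub>m n - P)"
    using P by (intro minus_mult_distrib_mat) auto
  also have "P * (1\<^sub>m n - P) = P * 1\<^sub>m n - P * P"
    using P by (intro mult_minus_distrib_mat) auto
  finally show ?thesis using P unfolding PP by (intro eq_matI) auto
qed

lemma eigenvalue_idempotent:
  fixes A :: "'a :: field mat"
  assumes A: "A \<in> carrier_mat n n" and AA: "A * A = A" and ev: "eigenvalue A l"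
  shows "l = 0 \<or> l = 1"
proof -
  obtain v where v: "v \<in> carrier_vec n" "v \<noteq> 0\<^sub>v n" and Av: "A *\<^sub>v v = l \<cdot>\<^sub>v v"
    using ev A unfolding eigenvalue_def eigenvector_def by auto
  obtain i where i: "i < n" "v $ i \<noteq> 0"
    using v by (metis eq_vecI carrier_vecD index_zero_vec)
  have "l \<cdot>\<^sub>v v = (A * A) *\<^sub>v v" by (simp add: AA Av)
  also have "\<dots> = A *\<^sub>v (l \<cdot>\<^sub>v v)" using A v by (simp add: Av)
  also have "\<dots> = l \<cdot>\<^sub>v (l \<cdot>\<^sub>v v)" using A v by (simp add: mult_mat_vec Av)
  finally have "l * v $ i = l * (l * v $ i)"
    using i v by (metis carrier_vecD index_smult_vec(1) index_smult_vec(2))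
  then have "l * (l - 1) * v $ i = 0" by (simp add: algebra_simps)
  then show ?thesis using i(2) by simp
qed

lemma eigenvalue_one_minus_mult:
  fixes A :: "'a :: comm_ring_1 mat"
  assumes A: "A \<in> carrier_mat n k" and B: "B \<in> carrier_mat k n"
    and v: "v \<in> carrier_vec n" "v \<noteq> 0\<^sub>v n" and Bv: "B *\<^sub>v v = 0\<^sub>v k"
  shows "eigenvalue (1\<^sub>m n - A * B) 1"
proof -
  have "(A * B) *\<^sub>v v = A *\<^sub>v 0\<^sub>v k" using A B v(1) by (simp add: Bv)
  also have "\<dots> = 0\<^sub>v n" using A by (intro eq_vecI) auto
  finally have "(A * B) *\<^sub>v v = 0\<^sub>v n" .
  then have "(1\<^sub>m n - A * B) *\<^sub>v v = 1 \<cdot>\<^sub>v v"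
    using A B v(1) by (subst minus_mult_distrib_mat_vec) auto
  then show ?thesis using v A unfolding eigenvalue_def eigenvector_def by auto
qed

lemma induced_norm_symmetric_idempotent:
  assumes R: "R \<in> carrier_mat n n" and sym: "transpose_mat R = R" and RR: "R * R = R"
    and one: "eigenvalue R 1"
  shows "induced_norm R = 1"
proof -
  have spec: "{l. eigenvalue R l} \<subseteq> {0, 1}"
    using eigenvalue_idempotent[OF R RR] by blast
  have "lambda_max R = 1"
    unfolding lambda_max_def
    by (rule Max_eqI) (use spec one finite_subset in auto)
  then show ?thesis by (simp add: induced_norm_def sym RR)
qed

locale simple_graph =
  fixes N :: nat and adj :: "nat \<Rightarrow> nat \<Rightarrow> bool"
  assumes adj_Vset: "\<And>i j. adj i j \<Longrightarrow> i \<in> Vset N \<and> j \<in> Vset N"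
    and adj_sym: "\<And>i j. adj i j \<Longrightarrow> adj j i"
    and adj_irrefl: "\<And>i. \<not> adj i i"
begin

lemma nbr_cl_subset_Vset: "i \<in> Vset N \<Longrightarrow> nbr_cl N adj i \<subseteq> Vset N"
  by (auto simp: nbr_cl_def nbr_def)

lemma card_nbr_cl: "card (nbr_cl N adj i) = mdeg N adj i"
proof -
  have "finite (nbr N adj i)" "i \<notin> nbr N adj i"
    using adj_irrefl by (auto simp: nbr_def Vset_def)
  then show ?thesis by (simp add: nbr_cl_def mdeg_def)
qed

lemma nbr_cl_sym: "j \<in> nbr_cl N adj i \<longleftrightarrow> i \<in> nbr_cl N adj j"
  using adj_sym adj_Vset by (auto simp: nbr_cl_def nbr_def)

lemma Bmat_nbr_cl: "j \<in> nbr_cl N adj i \<Longrightarrow> Bmat adj i j = 1"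
  by (auto simp: nbr_cl_def nbr_def Bmat_def adjA_def adj_irrefl)

lemma sum_Bmat_row:
  assumes "i \<in> Vset N"
  shows "(\<Sum>l = 1..N. Bmat adj i l) = mdeg N adj i"
proof -
  have "(\<Sum>l = 1..N. adjA adj i l) = card (nbr N adj i)"
    by (simp add: adjA_def nbr_def Vset_def sum.If_cases Int_def conj_commute)
  moreover have "(\<Sum>l = 1..N. if i = l then 1 else 0) = (1::nat)"
    using assms by (simp add: Vset_def)
  ultimately show ?thesis by (simp add: Bmat_def sum.distrib mdeg_def)
qed

text \<open>The slots s_ij of vertex i fill the block (block_start i, block_start (i + 1)]
  in increasing order of j; this is why (i, j) \<mapsto> s_ij is injective.\<close>

definition block_start :: "nat \<Rightarrow> nat" where
  "block_start i = (\<Sum>r = 1..i - 1. mdeg N adj r)"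

lemma sidx_block_start: "sidx N adj i j = (\<Sum>l = 1..j. Bmat adj i l) + block_start i"
  by (simp add: sidx_def block_start_def)

lemma block_start_Suc: "1 \<le> i \<Longrightarrow> block_start (Suc i) = block_start i + mdeg N adj i"
  unfolding block_start_def by (cases i) auto

lemma block_start_mono: "i \<le> i' \<Longrightarrow> block_start i \<le> block_start i'"
  unfolding block_start_def by (rule sum_mono2) auto

lemma block_start_after_last: "1 \<le> N \<Longrightarrow> block_start (Suc N) = mtot N adj"
  unfolding block_start_def mtot_def by simp

lemma sum_Bmat_prefix_bounds:
  assumes i: "i \<in> Vset N" and j: "j \<in> nbr_cl N adj i"
  shows "1 \<le> (\<Sum>l = 1..j. Bmat adj i l)" "(\<Sum>l = 1..j. Bmat adj i l) \<le> mdeg N adj i"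
proof -
  have jN: "1 \<le> j" "j \<le> N" using nbr_cl_subset_Vset[OF i] j by (auto simp: Vset_def)
  have "Bmat adj i j \<le> (\<Sum>l = 1..j. Bmat adj i l)"
    by (rule member_le_sum) (use jN in auto)
  then show "1 \<le> (\<Sum>l = 1..j. Bmat adj i l)" using Bmat_nbr_cl[OF j] by simp
  have "(\<Sum>l = 1..j. Bmat adj i l) \<le> (\<Sum>l = 1..N. Bmat adj i l)"
    by (rule sum_mono2) (use jN in auto)
  then show "(\<Sum>l = 1..j. Bmat adj i l) \<le> mdeg N adj i" using sum_Bmat_row[OF i] by simp
qed

lemma sum_Bmat_prefix_strict_mono:
  assumes j': "j' \<in> nbr_cl N adj i" and "j < j'"
  shows "(\<Sum>l = 1..j. Bmat adj i l) < (\<Sum>l = 1..j'. Bmat adj i l)"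
proof -
  have "{1..j'} = {1..j} \<union> {Suc j..j'}" using \<open>j < j'\<close> by auto
  then have "(\<Sum>l = 1..j'. Bmat adj i l) = (\<Sum>l = 1..j. Bmat adj i l) + (\<Sum>l = Suc j..j'. Bmat adj i l)"
    by (simp add: sum.union_disjoint)
  moreover have "Bmat adj i j' \<le> (\<Sum>l = Suc j..j'. Bmat adj i l)"
    by (rule member_le_sum) (use \<open>j < j'\<close> in auto)
  ultimately show ?thesis using Bmat_nbr_cl[OF j'] by simp
qed

lemma sidx_bounds:
  assumes i: "i \<in> Vset N" and j: "j \<in> nbr_cl N adj i"
  shows "block_start i < sidx N adj i j" "sidx N adj i j \<le> block_start (Suc i)"
  using sum_Bmat_prefix_bounds[OF assms] block_start_Suc[of i] i
  by (auto simp: sidx_block_start Vset_def)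

lemma sidx_bounds_mtot:
  assumes i: "i \<in> Vset N" and j: "j \<in> nbr_cl N adj i"
  shows "1 \<le> sidx N adj i j" "sidx N adj i j \<le> mtot N adj"
proof -
  show "1 \<le> sidx N adj i j" using sidx_bounds(1)[OF assms] by simp
  have "block_start (Suc i) \<le> block_start (Suc N)"
    using i by (intro block_start_mono) (auto simp: Vset_def)
  then show "sidx N adj i j \<le> mtot N adj"
    using sidx_bounds(2)[OF assms] block_start_after_last i by (auto simp: Vset_def)
qed

lemma sidx_inj:
  assumes i: "i \<in> Vset N" "j \<in> nbr_cl N adj i" and i': "i' \<in> Vset N" "j' \<in> nbr_cl N adj i'"
    and eq: "sidx N adj i j = sidx N adj i' j'"
  shows "i = i' \<and> j = j'"
proof -
  have "\<not> i < i'" if "i \<in> Vset N" "j \<in> nbr_cl N adj i" "i' \<in> Vset N" "j' \<in> nbr_cl N adj i'"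
    "sidx N adj i j = sidx N adj i' j'" for i j i' j'
    using sidx_bounds[OF that(1,2)] sidx_bounds[OF that(3,4)] block_start_mono[of "Suc i" i'] that(5)
    by linarith
  then have ii': "i = i'" using i i' eq by (metis linorder_neqE_nat)
  have "\<not> j < j'" if "j' \<in> nbr_cl N adj i" "sidx N adj i j = sidx N adj i j'" for j j'
    using sum_Bmat_prefix_strict_mono[OF that(1), of j] that(2) by (auto simp: sidx_block_start)
  then have "j = j'" using i(2) i'(2) eq unfolding ii' by (metis linorder_neqE_nat)
  with ii' show ?thesis ..
qed

definition col_support :: "nat \<Rightarrow> nat set" where
  "col_support j = (\<lambda>i. sidx N adj i (Suc j) - 1) ` nbr_cl N adj (Suc j)"

lemma sidx_pred_inj:
  assumes "i \<in> Vset N" "j \<in> nbr_cl N adj i" "i' \<in> Vset N" "j' \<in> nbr_cl N adj i'"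
    and "sidx N adj i j - 1 = sidx N adj i' j' - 1"
  shows "i = i' \<and> j = j'"
  using sidx_inj[OF assms(1-4)] sidx_bounds_mtot(1)[OF assms(1,2)] sidx_bounds_mtot(1)[OF assms(3,4)]
    assms(5) by linarith

lemma col_support_Vset:
  assumes "j < N" "i \<in> nbr_cl N adj (Suc j)"
  shows "i \<in> Vset N" "Suc j \<in> nbr_cl N adj i"
  using assms nbr_cl_subset_Vset[of "Suc j"] nbr_cl_sym by (auto simp: Vset_def)

lemma Hmat_carrier: "Hmat N adj \<in> carrier_mat (mtot N adj) N"
  by (simp add: Hmat_def)

lemma Hmat_entry:
  assumes k: "k < mtot N adj" and j: "j < N"
  shows "Hmat N adj $$ (k, j) = (if k \<in> col_support j then 1 else 0)"
proof -
  let ?S = "{i \<in> Vset N. Suc j \<in> nbr_cl N adj i \<and> Suc k = sidx N adj i (Suc j)}"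
  have "Hmat N adj $$ (k, j) = (\<Sum>i \<in> Vset N. if i \<in> ?S then 1 else 0)"
    using k j by (auto simp: Hmat_def Evec_def Vset_def intro!: sum.cong)
  also have "\<dots> = real (card ?S)"
  proof -
    have "finite (Vset N)" "Vset N \<inter> ?S = ?S" by (auto simp: Vset_def)
    then show ?thesis by (simp only: sum.If_cases) simp
  qed
  also have "card ?S = (if k \<in> col_support j then 1 else 0)"
  proof (cases "k \<in> col_support j")
    case True
    then obtain i where i_nbr: "i \<in> nbr_cl N adj (Suc j)" and k_eq: "k = sidx N adj i (Suc j) - 1"
      by (auto simp: col_support_def)
    note iV = col_support_Vset(1)[OF j i_nbr] and i = col_support_Vset(2)[OF j i_nbr]
    have ki: "Suc k = sidx N adj i (Suc j)" using k_eq sidx_bounds_mtot(1)[OF iV i] by simp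
    have "?S = {i}"
    proof (intro equalityI subsetI)
      fix x assume x: "x \<in> ?S"
      then have "sidx N adj x (Suc j) = sidx N adj i (Suc j)" using ki by simp
      with x show "x \<in> {i}" using sidx_inj[OF _ _ iV i, of x "Suc j"] by blast
    qed (use iV i ki in simp)
    then show ?thesis using True by simp
  next
    case False
    have "x \<notin> ?S" for x
    proof
      assume x: "x \<in> ?S"
      then have "k = sidx N adj x (Suc j) - 1" by (simp add: eq_commute[of "Suc k"])
      moreover have "x \<in> nbr_cl N adj (Suc j)" using x nbr_cl_sym by blast
      ultimately show False using False unfolding col_support_def by blast
    qed
    then have S_empty: "?S = {}" by blast
    show ?thesis unfolding S_empty using False by simp
  qed
  finally show ?thesis by simp
qed

lemma col_support_subset: "j < N \<Longrightarrow> col_support j \<subseteq> {..<mtot N adj}"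
  using sidx_bounds_mtot col_support_Vset by (fastforce simp: col_support_def)

lemma card_col_support: "j < N \<Longrightarrow> card (col_support j) = mdeg N adj (Suc j)"
proof -
  assume j: "j < N"
  have "inj_on (\<lambda>i. sidx N adj i (Suc j) - 1) (nbr_cl N adj (Suc j))"
    by (rule inj_onI) (use sidx_pred_inj col_support_Vset[OF j] in blast)
  then show ?thesis by (simp add: col_support_def card_image card_nbr_cl)
qed

lemma col_support_disjoint:
  assumes "j < N" "j' < N" "j \<noteq> j'"
  shows "col_support j \<inter> col_support j' = {}"
proof -
  have False if "x \<in> nbr_cl N adj (Suc j)" "y \<in> nbr_cl N adj (Suc j')"
    "sidx N adj x (Suc j) - 1 = sidx N adj y (Suc j') - 1" for x y
    using sidx_pred_inj[OF col_support_Vset[OF assms(1) that(1)] col_support_Vset[OF assms(2) that(2)] that(3)]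
      assms(3) by simp
  then show ?thesis unfolding col_support_def by blast
qed

lemma mem_col_support_sidx:
  assumes i: "i \<in> Vset N" and j: "j \<in> nbr_cl N adj i" and j': "j' < N"
  shows "sidx N adj i j - 1 \<in> col_support j' \<longleftrightarrow> Suc j' = j"
proof
  assume "sidx N adj i j - 1 \<in> col_support j'"
  then obtain x where "x \<in> nbr_cl N adj (Suc j')" "sidx N adj i j - 1 = sidx N adj x (Suc j') - 1"
    by (auto simp: col_support_def)
  then show "Suc j' = j" using sidx_pred_inj[OF i j] col_support_Vset[OF j'] by metis
next
  assume "Suc j' = j"
  then show "sidx N adj i j - 1 \<in> col_support j'"
    using i j nbr_cl_sym unfolding col_support_def by blast
qed

lemma Gram_Hmat: "transpose_mat (Hmat N adj) * Hmat N adj = mat_diag N (\<lambda>j. real (mdeg N adj (Suc j)))"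
proof (rule eq_matI)
  fix j j' assume "j < dim_row (mat_diag N (\<lambda>j. real (mdeg N adj (Suc j))))"
    "j' < dim_col (mat_diag N (\<lambda>j. real (mdeg N adj (Suc j))))"
  then have j: "j < N" and j': "j' < N" by (auto simp: mat_diag_def)
  have "(transpose_mat (Hmat N adj) * Hmat N adj) $$ (j, j')
      = (\<Sum>k<mtot N adj. if k \<in> col_support j \<inter> col_support j' then 1 else 0)"
    using j j' Hmat_carrier
    by (auto simp: scalar_prod_def Hmat_entry atLeast0LessThan intro!: sum.cong)
  also have "\<dots> = real (card (col_support j \<inter> col_support j'))"
  proof -
    have "{..<mtot N adj} \<inter> (col_support j \<inter> col_support j') = col_support j \<inter> col_support j'"
      using col_support_subset[OF j] by blast
    then show ?thesis by (simp only: sum.If_cases finite_lessThan Collect_mem_eq) simp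
  qed
  also have "\<dots> = mat_diag N (\<lambda>j. real (mdeg N adj (Suc j))) $$ (j, j')"
    using j j' card_col_support col_support_disjoint by (auto simp: mat_diag_def)
  finally show "(transpose_mat (Hmat N adj) * Hmat N adj) $$ (j, j')
      = mat_diag N (\<lambda>j. real (mdeg N adj (Suc j))) $$ (j, j')" .
qed (use Hmat_carrier in \<open>auto simp: mat_diag_def\<close>)

lemma Hbar_eq: "Hbar N adj = mat_diag N (\<lambda>j. 1 / real (mdeg N adj (Suc j))) * transpose_mat (Hmat N adj)"
proof -
  have "mat N N (\<lambda>(i, j). if i = j then 1 / real (mdeg N adj (Suc i)) else 0)
      = mat_diag N (\<lambda>j. 1 / real (mdeg N adj (Suc j)))"
    by (intro eq_matI) (auto simp: mat_diag_def)
  then show ?thesis by (simp add: Hbar_def)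
qed

lemma Hbar_carrier: "Hbar N adj \<in> carrier_mat N (mtot N adj)"
  unfolding Hbar_eq using Hmat_carrier by (intro mult_carrier_mat[of _ N N]) auto

lemma Hbar_mult_Hmat: "Hbar N adj * Hmat N adj = 1\<^sub>m N"
proof -
  have "Hbar N adj * Hmat N adj
      = mat_diag N (\<lambda>j. 1 / real (mdeg N adj (Suc j))) * (transpose_mat (Hmat N adj) * Hmat N adj)"
    unfolding Hbar_eq using Hmat_carrier by (intro assoc_mult_mat[of _ N N _ "mtot N adj" _ N]) auto
  also have "\<dots> = mat_diag N (\<lambda>_. 1)"
    by (simp add: Gram_Hmat mdeg_def)
  finally show ?thesis by simp
qed

lemma Hmat_mult_Hbar_symmetric: "transpose_mat (Hmat N adj * Hbar N adj) = Hmat N adj * Hbar N adj"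
proof -
  let ?D = "mat_diag N (\<lambda>j. 1 / real (mdeg N adj (Suc j)))" and ?H = "Hmat N adj"
  have H: "?H \<in> carrier_mat (mtot N adj) N" and D: "?D \<in> carrier_mat N N"
    and DH: "?D * transpose_mat ?H \<in> carrier_mat N (mtot N adj)"
    using Hmat_carrier Hbar_carrier by (auto simp: Hbar_eq)
  have "transpose_mat (?H * (?D * transpose_mat ?H)) = transpose_mat (?D * transpose_mat ?H) * transpose_mat ?H"
    using H DH by (rule transpose_mult)
  also have "\<dots> = (?H * ?D) * transpose_mat ?H"
    using transpose_mult[OF D, of "transpose_mat ?H" "mtot N adj"] H by (simp add: transpose_mat_diag)
  also have "\<dots> = ?H * (?D * transpose_mat ?H)"
    using H D by (intro assoc_mult_mat[of _ _ N _ N]) auto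
  finally show ?thesis by (simp add: Hbar_eq)
qed

lemma Rmat_carrier: "Rmat N adj \<in> carrier_mat (mtot N adj) (mtot N adj)"
  unfolding Rmat_def using Hmat_carrier Hbar_carrier by (intro minus_carrier_mat mult_carrier_mat) auto

lemma Rmat_symmetric: "transpose_mat (Rmat N adj) = Rmat N adj"
  using Hmat_carrier Hbar_carrier unfolding Rmat_def
  by (subst transpose_minus[of _ "mtot N adj" "mtot N adj"]) (auto simp: Hmat_mult_Hbar_symmetric)

lemma Rmat_idempotent: "Rmat N adj * Rmat N adj = Rmat N adj"
  unfolding Rmat_def using Hmat_carrier Hbar_carrier
  by (intro idempotent_one_minus idempotent_of_left_inverse[OF Hmat_carrier Hbar_carrier Hbar_mult_Hmat]
      mult_carrier_mat)

lemma eigenvalue_Rmat_one: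
  assumes ab: "adj a b"
  shows "eigenvalue (Rmat N adj) 1"
proof -
  have a: "a \<in> Vset N" "b \<in> nbr_cl N adj a" and b: "b \<in> Vset N" "b \<in> nbr_cl N adj b"
    using adj_Vset[OF ab] ab by (auto simp: nbr_cl_def nbr_def)
  define p where "p = sidx N adj a b - 1"
  define q where "q = sidx N adj b b - 1"
  have p: "p < mtot N adj" and q: "q < mtot N adj"
    using sidx_bounds_mtot[OF a] sidx_bounds_mtot[OF b] by (auto simp: p_def q_def)
  have "p \<noteq> q"
    using sidx_pred_inj[OF a b] adj_irrefl ab by (auto simp: p_def q_def)
  then have v: "unit_vec (mtot N adj) p - unit_vec (mtot N adj) q \<noteq> (0\<^sub>v (mtot N adj) :: real vec)"
    using p q by (metis diff_zero index_minus_vec(1) index_unit_vec index_zero_vec(1) zero_neq_one)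
  have rows_eq: "Hmat N adj $$ (p, j) = Hmat N adj $$ (q, j)" if "j < N" for j
    using that p q mem_col_support_sidx[OF a that] mem_col_support_sidx[OF b that]
    by (simp add: Hmat_entry p_def q_def)
  let ?D = "mat_diag N (\<lambda>j. 1 / real (mdeg N adj (Suc j)))"
    and ?w = "unit_vec (mtot N adj) p - unit_vec (mtot N adj) q"
  have "Hbar N adj *\<^sub>v ?w = ?D *\<^sub>v (transpose_mat (Hmat N adj) *\<^sub>v ?w)"
    unfolding Hbar_eq using Hmat_carrier by (intro assoc_mult_mat_vec[of _ N N]) auto
  also have "transpose_mat (Hmat N adj) *\<^sub>v ?w = 0\<^sub>v N"
    using Hmat_carrier p q rows_eq
    by (intro eq_vecI) (auto simp: mult_minus_distrib_mat_vec[of _ N "mtot N adj"])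
  also have "?D *\<^sub>v 0\<^sub>v N = 0\<^sub>v N"
    by (intro eq_vecI) (auto simp: mat_diag_def scalar_prod_def)
  finally have "Hbar N adj *\<^sub>v ?w = 0\<^sub>v N" .
  then show ?thesis
    unfolding Rmat_def using Hmat_carrier Hbar_carrier v
    by (intro eigenvalue_one_minus_mult) auto
qed

end

theorem lemma5:
  fixes N :: nat and adj :: "nat \<Rightarrow> nat \<Rightarrow> bool"
  assumes "N \<ge> 2"
    and "\<And>i j. adj i j \<Longrightarrow> i \<in> Vset N \<and> j \<in> Vset N"
    and "\<And>i j. adj i j \<Longrightarrow> adj j i"
    and "\<And>i. \<not> adj i i"
    and "\<And>i j. i \<in> Vset N \<Longrightarrow> j \<in> Vset N \<Longrightarrow> adj\<^sup>*\<^sup>* i j"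
    and "\<exists>i \<in> Vset N. \<exists>j \<in> Vset N. i \<noteq> j \<and> \<not> adj i j"
  shows "induced_norm (Rmat N adj) = 1"
proof -
  interpret simple_graph N adj
    using assms(2-4) by unfold_locales blast+
  have "adj\<^sup>*\<^sup>* 1 2" using assms(1,5) by (simp add: Vset_def)
  then obtain b where "adj 1 b" by (rule converse_rtranclpE) auto
  then show ?thesis
    using induced_norm_symmetric_idempotent[OF Rmat_carrier Rmat_symmetric Rmat_idempotent]
      eigenvalue_Rmat_one by blast
qed

end
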